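(* Fix an integer $k\ge2$ and let $w$ and $\widetilde w$ be as in the context. Then for all $x\in\mathbb R$, $$Mw(x)\le\frac92\,\widetilde w(x).$$
   Context: All intervals are half-open, $[a,b)$. $Mf(x)=\sup_{I\ni x}\frac1{|I|}\int_I|f|$ over intervals $I\ni x$. Fix an integer $k\ge2$, $\varepsilon=3^{-k}$, $p=\frac{1}{3\varepsilon}\Big(\frac{1+\varepsilon}{2}+\frac{4\varepsilon^2}{1+\varepsilon}\Big)$, $u=\sqrt p+\sqrt{p-1}$. For an interval $I$: $I_\pm$ its left/right halves; $I_m$ ($0\le m\le k-1$) the interval with the same right endpoint as $I$ and length $3^{-m}|I|$; $J^{(i)}$ ($i=1,2,3$) the $i$-th from the left of the three equal thirds of $J$. For $\omega\sigma=p$: $w_0(\omega,\sigma,I)=\frac{\omega}{\sqrt p}(u\chi_{I_-}+u^{-1}\chi_{I_+})$ and, for $\nu\ge1$, $w_\nu(\omega,\sigma,I)=\frac{\omega}{p}\big(\sum_{m=0}^{k-2}\chi_{I_m^{(1)}}+\chi_{I_{k-1}^{(1)}\cup I_{k-1}^{(2)}}+\frac{4\varepsilon}{1+\varepsilon}\chi_{I_{k-1}^{(3)}}\big)+\sum_{m=0}^{k-2}w_{\nu-1}(2\omega,\frac\sigma2,I_m^{(2)})$. Let $n=3^{k-1}$ and let $w$ be the $1$-periodic extension of $w_n(1,p,[0,1))$ to $\mathbb R$. Carrying: each $[j,j+1)$, $j\in\mathbb Z$, carries $w_n$; if $I$ carries $w_\nu$ with $\nu\ge1$, then each $I_m^{(2)}$,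 $0\le m\le k-2$, carries $w_{\nu-1}$. $\operatorname{supp}w_\nu$ denotes the union of all intervals carrying $w_\nu$. Define the $1$-periodic function $\widetilde w=\sum_{l=1}^n2^l\chi_{\operatorname{supp}w_{n-(l-1)}\setminus\operatorname{supp}w_{n-l}}+2^{n+1}\chi_{\operatorname{supp}w_0}$. *)

theory Defs
  imports "HOL-Analysis.Analysis"
begin

definition ivl :: "real \<times> real \<Rightarrow> real set" where
  "ivl I = {fst I..<snd I}"

definition eps :: "nat \<Rightarrow> real" where
  "eps k = 1 / 3 ^ k"

definition pp :: "nat \<Rightarrow> real" where
  "pp k = (1 / (3 * eps k)) * ((1 + eps k) / 2 + 4 * (eps k)\<^sup>2 / (1 + eps k))"

definition uu :: "nat \<Rightarrow> real" where
  "uu k = sqrt (pp k) + sqrt (pp k - 1)"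

definition lhalf :: "real \<times> real \<Rightarrow> real \<times> real" where
  "lhalf I = (fst I, (fst I + snd I) / 2)"

definition rhalf :: "real \<times> real \<Rightarrow> real \<times> real" where
  "rhalf I = ((fst I + snd I) / 2, snd I)"

definition Im :: "nat \<Rightarrow> real \<times> real \<Rightarrow> real \<times> real" where
  "Im m I = (snd I - (snd I - fst I) / 3 ^ m, snd I)"

definition third :: "nat \<Rightarrow> real \<times> real \<Rightarrow> real \<times> real" where
  "third i J = (fst J + (real i - 1) * (snd J - fst J) / 3, fst J + real i * (snd J - fst J) / 3)"

text \<open>wfun k \<nu> \<omega> \<sigma> I is the function w_\<nu>(\<omega>,\<sigma>,I).\<close>
fun wfun :: "nat \<Rightarrow> nat \<Rightarrow> real \<Rightarrow> real \<Rightarrow> real \<times> real \<Rightarrow> real \<Rightarrow> real" where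
  "wfun k 0 \<omega> \<sigma> I x =
     \<omega> / sqrt (pp k) * (uu k * indicator (ivl (lhalf I)) x + (1 / uu k) * indicator (ivl (rhalf I)) x)"
| "wfun k (Suc \<nu>) \<omega> \<sigma> I x =
     \<omega> / pp k * ((\<Sum>m\<in>{0..k-2}. indicator (ivl (third 1 (Im m I))) x)
        + indicator (ivl (third 1 (Im (k-1) I)) \<union> ivl (third 2 (Im (k-1) I))) x
        + 4 * eps k / (1 + eps k) * indicator (ivl (third 3 (Im (k-1) I))) x)
     + (\<Sum>m\<in>{0..k-2}. wfun k \<nu> (2 * \<omega>) (\<sigma> / 2) (third 2 (Im m I)) x)"

definition nn :: "nat \<Rightarrow> nat" where
  "nn k = 3 ^ (k - 1)"

definition wper :: "nat \<Rightarrow> real \<Rightarrow> real" where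
  "wper k x = wfun k (nn k) 1 (pp k) (0, 1) (frac x)"

text \<open>carriers k d: intervals carrying w_{n-d} (d \<le> n).\<close>
fun carriers :: "nat \<Rightarrow> nat \<Rightarrow> (real \<times> real) set" where
  "carriers k 0 = {(of_int j, of_int j + 1) | j :: int. True}"
| "carriers k (Suc d) = {third 2 (Im m I) | I m. I \<in> carriers k d \<and> m \<le> k - 2}"

text \<open>supp w_\<nu> (for \<nu> \<le> n).\<close>
definition suppw :: "nat \<Rightarrow> nat \<Rightarrow> real set" where
  "suppw k \<nu> = (\<Union>I\<in>carriers k (nn k - \<nu>). ivl I)"

definition wtilde :: "nat \<Rightarrow> real \<Rightarrow> real" where
  "wtilde k x =
     (\<Sum>l\<in>{1..nn k}. 2 ^ l * indicator (suppw k (nn k - (l - 1)) - suppw k (nn k - l)) x)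
     + 2 ^ (nn k + 1) * indicator (suppw k 0) x"

definition maxfun :: "(real \<Rightarrow> real) \<Rightarrow> real \<Rightarrow> ereal" where
  "maxfun f x = (SUP I \<in> {(a, b). a \<le> x \<and> x < b}.
      ereal (integral {fst I..<snd I} (\<lambda>t. \<bar>f t\<bar>) / (snd I - fst I)))"

end

theory Submission
  imports Defs
begin

text \<open>On a carrier \<open>I\<close> of depth \<open>d\<close> (an interval carrying \<open>w\<^sub>n\<^sub>-\<^sub>d\<close>) the function \<open>w\<close>
  coincides with \<open>w\<^sub>n\<^sub>-\<^sub>d(2\<^sup>d,\<sigma>,I)\<close>, and \<open>w\<^sup>~ \<ge> 2\<^sup>d\<^sup>+\<^sup>1\<close> on \<open>I\<close>.
  The function \<open>w\<^sub>\<nu>(\<omega>,\<sigma>,I)\<close> vanishes outside \<open>I\<close>, is at most \<open>2\<omega>\<close> away from the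
  children \<open>I\<^sub>m\<^sup>(\<^sup>2\<^sup>)\<close>, and has total mass \<open>\<omega>|I|\<close>; by induction on \<open>\<nu>\<close> its
  integral over an initial or final segment \<open>J\<close> of \<open>I\<close> is then at most \<open>4\<omega>|J|\<close>.
  An interval \<open>J \<ni> x\<close> either meets two unit intervals, and then its average is at most
  \<open>4 \<le> 2w\<^sup>~(x)\<close>, or lies in a deepest carrier \<open>I\<close> of some depth \<open>d\<close> without lying in a child of
  \<open>I\<close>; splitting \<open>J\<close> along the children, its average is then at most
  \<open>8\<cdot>2\<^sup>d \<le> 4w\<^sup>~(x)\<close>. So in fact \<open>Mw \<le> 4w\<^sup>~\<close>.\<close>

section \<open>Integrals of step functions over half-open intervals\<close>

definition overlap :: "real \<Rightarrow> real \<Rightarrow> real \<Rightarrow> real \<Rightarrow> real" where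
  "overlap c e x y = max 0 (min e y - max c x)"

lemma overlap_nonneg: "overlap c e x y \<ge> 0"
  by (simp add: overlap_def)

lemma overlap_le: "x \<le> y \<Longrightarrow> overlap c e x y \<le> y - x"
  by (auto simp: overlap_def)

lemma has_integral_indicator_Ico:
  "((indicator {x..<y} :: real \<Rightarrow> real) has_integral overlap c e x y) {c..<e}"
proof -
  have "((\<lambda>t. 1::real) has_integral overlap c e x y) ({x..<y} \<inter> {c..<e})"
  proof (cases "max c x \<le> min e y")
    case True
    have "((\<lambda>t. 1::real) has_integral (min e y - max c x)) {max c x..min e y}"
      using has_integral_const_real[of "1::real" "max c x" "min e y"] True by simp
    then have "((\<lambda>t. 1::real) has_integral (min e y - max c x)) {max c x..<min e y}"
      by (rule has_integral_spike_set_eq[THEN iffD1, rotated -1])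
         (auto intro: negligible_subset[of "{min e y}"])
    moreover have "{x..<y} \<inter> {c..<e} = {max c x..<min e y}" by auto
    moreover have "overlap c e x y = min e y - max c x" using True by (simp add: overlap_def)
    ultimately show ?thesis by simp
  next
    case False
    then have "{x..<y} \<inter> {c..<e} = {}" and "overlap c e x y = 0"
      by (auto simp: overlap_def)
    then show ?thesis by (simp only:) simp
  qed
  moreover have "(indicator {x..<y} :: real \<Rightarrow> real) = (\<lambda>t. if t \<in> {x..<y} then 1 else 0)"
    by (auto simp: indicator_def)
  ultimately show ?thesis by (simp only: has_integral_restrict_Int)
qed

lemma integral_indicator_Ico:
  "integral {c..<e} (indicator {x..<y} :: real \<Rightarrow> real) = overlap c e x y"
  using has_integral_indicator_Ico by (rule integral_unique)

lemma integrable_indicator_Ico: "(indicator {x..<y} :: real \<Rightarrow> real) integrable_on {c..<e}"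
  using has_integral_indicator_Ico by blast

lemma integral_Ico_le_const:
  fixes f :: "real \<Rightarrow> real"
  assumes "f integrable_on {c..<e}" "c \<le> e" "\<And>x. x \<in> {c..<e} \<Longrightarrow> f x \<le> C"
  shows "integral {c..<e} f \<le> C * (e - c)"
proof -
  have "integral {c..<e} f \<le> integral {c..<e} (\<lambda>x. C * indicator {c..<e} x)"
    using assms by (intro integral_le integrable_on_mult_right integrable_indicator_Ico) auto
  also have "\<dots> = C * (e - c)"
    using \<open>c \<le> e\<close> by (simp add: integral_indicator_Ico overlap_def)
  finally show ?thesis .
qed

lemma integral_Ico_restrict:
  fixes f :: "real \<Rightarrow> real"
  assumes "\<And>x. x \<notin> {\<alpha>..<\<beta>} \<Longrightarrow> f x = 0"
  shows "integral {c..<e} f = integral {max c \<alpha>..<min e \<beta>} f"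
proof -
  have "integral {c..<e} f = integral {c..<e} (\<lambda>x. if x \<in> {\<alpha>..<\<beta>} then f x else 0)"
    using assms by (intro integral_cong) auto
  also have "\<dots> = integral ({\<alpha>..<\<beta>} \<inter> {c..<e}) f" by (rule integral_restrict_Int)
  also have "{\<alpha>..<\<beta>} \<inter> {c..<e} = {max c \<alpha>..<min e \<beta>}" by auto
  finally show ?thesis .
qed

lemma integral_le_by_end_segments:
  fixes f :: "real \<Rightarrow> real"
  assumes supp: "\<And>x. x \<notin> {\<alpha>..<\<beta>} \<Longrightarrow> f x = 0"
    and ends: "\<And>s t. \<alpha> \<le> s \<Longrightarrow> s < t \<Longrightarrow> t \<le> \<beta> \<Longrightarrow> s = \<alpha> \<or> t = \<beta> \<Longrightarrow>
                 integral {s..<t} f \<le> C * (t - s)"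
    and "C \<ge> 0" and not_inside: "\<not> (\<alpha> \<le> c \<and> e \<le> \<beta>)"
  shows "integral {c..<e} f \<le> C * overlap c e \<alpha> \<beta>"
proof -
  have restrict: "integral {c..<e} f = integral {max c \<alpha>..<min e \<beta>} f"
    using supp by (rule integral_Ico_restrict)
  show ?thesis
  proof (cases "max c \<alpha> < min e \<beta>")
    case True
    have "integral {max c \<alpha>..<min e \<beta>} f \<le> C * (min e \<beta> - max c \<alpha>)"
      using True not_inside by (intro ends) auto
    then show ?thesis using True by (simp add: restrict overlap_def)
  next
    case False
    then have empty: "{max c \<alpha>..<min e \<beta>} = {}" by auto
    show ?thesis using \<open>C \<ge> 0\<close> by (simp only: restrict empty) (simp add: overlap_nonneg)
  qed
qed

lemma integral_le_by_mass:
  fixes f :: "real \<Rightarrow> real"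
  assumes supp: "\<And>x. x \<notin> {\<alpha>..<\<beta>} \<Longrightarrow> f x = 0"
    and mass: "integral {\<alpha>..<\<beta>} f \<le> M * (\<beta> - \<alpha>)"
    and "M \<ge> 0" and "\<alpha> \<le> \<beta>" and contains_or_misses: "s \<le> \<alpha> \<and> \<beta> \<le> t \<or> t \<le> \<alpha> \<or> \<beta> \<le> s"
  shows "integral {s..<t} f \<le> M * overlap s t \<alpha> \<beta>"
proof -
  have restrict: "integral {s..<t} f = integral {max s \<alpha>..<min t \<beta>} f"
    using supp by (rule integral_Ico_restrict)
  show ?thesis
  proof (cases "s \<le> \<alpha> \<and> \<beta> \<le> t")
    case True
    then show ?thesis using mass \<open>\<alpha> \<le> \<beta>\<close> by (simp add: restrict overlap_def)
  next
    case False
    then have empty: "{max s \<alpha>..<min t \<beta>} = {}" using contains_or_misses by auto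
    show ?thesis using \<open>M \<ge> 0\<close> by (simp only: restrict empty) (simp add: overlap_nonneg)
  qed
qed


lemma eps_pos: "eps k > 0"
  by (simp add: eps_def)

lemma eps_le_one_ninth: "k \<ge> 2 \<Longrightarrow> eps k \<le> 1/9"
  using power_increasing[of 2 k "3::real"] by (simp add: eps_def divide_simps)

lemma three_eps_eq: "k \<ge> 1 \<Longrightarrow> 3 * eps k = 1 / 3 ^ (k - 1)"
  by (cases k) (simp_all add: eps_def)

lemma pp_pos: "pp k > 0"
  using eps_pos[of k] by (simp add: pp_def add_pos_nonneg)

lemma pp_ge: "k \<ge> 2 \<Longrightarrow> pp k \<ge> 3 ^ (k - 1) / 2"
proof -
  assume k: "k \<ge> 2"
  have "1/2 \<le> (1 + eps k) / 2 + 4 * (eps k)\<^sup>2 / (1 + eps k)"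
    using eps_pos[of k] by (simp add: add_increasing2)
  then have "3 ^ (k - 1) * (1/2) \<le> 3 ^ (k - 1) * ((1 + eps k) / 2 + 4 * (eps k)\<^sup>2 / (1 + eps k))"
    by (intro mult_left_mono) auto
  moreover have "1 / (3 * eps k) = 3 ^ (k - 1)"
    using three_eps_eq[of k] k by simp
  ultimately show ?thesis by (simp add: pp_def)
qed

lemma pp_ge_three_halves: "k \<ge> 2 \<Longrightarrow> pp k \<ge> 3/2"
proof -
  assume k: "k \<ge> 2"
  have "(3::real) ^ 1 \<le> 3 ^ (k - 1)" using k by (intro power_increasing) auto
  then show ?thesis using pp_ge[OF k] by simp
qed

lemma Suc_k_div_pp_le: "k \<ge> 2 \<Longrightarrow> (real k + 1) / pp k \<le> 2"
proof -
  assume k: "k \<ge> 2"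
  have "real k + 1 \<le> 3 ^ (k - 1)"
    using k
  proof (induction k rule: nat_induct_at_least)
    case (Suc n)
    then have "(3::real) ^ (Suc n - 1) = 3 * 3 ^ (n - 1)" by (cases n) auto
    then show ?case using Suc by simp
  qed simp
  then show ?thesis
    using pp_ge[OF k] pp_ge_three_halves[OF k] by (simp add: divide_simps)
qed

lemma uu_pos: "k \<ge> 2 \<Longrightarrow> uu k > 0"
  using pp_ge_three_halves[of k] by (simp add: uu_def add_pos_nonneg)

lemma uu_plus_inverse: "k \<ge> 2 \<Longrightarrow> (uu k + 1 / uu k) / sqrt (pp k) = 2"
proof -
  assume k: "k \<ge> 2"
  have p: "pp k \<ge> 1" using pp_ge_three_halves[OF k] by simp
  have "uu k * (sqrt (pp k) - sqrt (pp k - 1)) = (sqrt (pp k))\<^sup>2 - (sqrt (pp k - 1))\<^sup>2"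
    by (simp add: uu_def power2_eq_square algebra_simps)
  also have "\<dots> = 1" using p by simp
  finally have "1 / uu k = sqrt (pp k) - sqrt (pp k - 1)"
    using uu_pos[OF k] by (simp add: field_simps)
  then show ?thesis using p by (simp add: uu_def)
qed

lemma tail_weight_bounds: "k \<ge> 2 \<Longrightarrow> 0 \<le> 4 * eps k / (1 + eps k) \<and> 4 * eps k / (1 + eps k) \<le> 1"
  using eps_le_one_ninth[of k] eps_pos[of k] by (simp add: divide_simps)

lemma sum_inverse_powers_3: "(\<Sum>m\<in>{0..j}. (1::real) / 3 ^ Suc m) = (1 - 1 / 3 ^ Suc j) / 2"
proof (induction j)
  case (Suc j)
  have "(\<Sum>m\<in>{0..Suc j}. (1::real) / 3 ^ Suc m) = (1 - 1 / 3 ^ Suc j) / 2 + 1 / 3 ^ Suc (Suc j)"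
    using Suc.IH by simp
  also have "\<dots> = (1 - 1 / 3 ^ Suc (Suc j)) / 2"
    by (simp only: power_Suc[of 3 "Suc j"]) (simp add: field_simps)
  finally show ?case .
qed simp

text \<open>This identity is what fixes \<open>p\<close>: it makes the total mass of \<open>w\<^sub>\<nu>(\<omega>,\<sigma>,I)\<close>
  equal to \<open>\<omega>|I|\<close> for every \<open>\<nu> \<ge> 1\<close>.\<close>

lemma pp_mass_identity:
  "(1 - 3 * eps k) / 2 + 2 * eps k + 4 * eps k / (1 + eps k) * eps k = pp k * (3 * eps k)"
proof -
  have "pp k * (3 * eps k) = (1 + eps k) / 2 + 4 * (eps k)\<^sup>2 / (1 + eps k)"
    using eps_pos[of k] by (simp add: pp_def)
  then show ?thesis using eps_pos[of k] by (simp add: field_simps power2_eq_square)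
qed


definition third_len :: "nat \<Rightarrow> real \<Rightarrow> real \<Rightarrow> real" where
  "third_len m a b = (b - a) / 3 ^ Suc m"

lemma third1_Im: "third 1 (Im m (a, b)) = (b - 3 * third_len m a b, b - 2 * third_len m a b)"
  and third2_Im: "third 2 (Im m (a, b)) = (b - 2 * third_len m a b, b - third_len m a b)"
  and third3_Im: "third 3 (Im m (a, b)) = (b - third_len m a b, b)"
  by (simp_all add: third_def Im_def third_len_def field_simps)

lemma third_len_pos: "a < b \<Longrightarrow> third_len m a b > 0"
  by (simp add: third_len_def)

lemma third_len_le: "a \<le> b \<Longrightarrow> 3 * third_len m a b \<le> b - a"
  using divide_left_mono[of 1 "3 ^ m" "b - a"] by (simp add: third_len_def field_simps)

lemma third_len_mono: "m < m' \<Longrightarrow> a < b \<Longrightarrow> 3 * third_len m' a b \<le> third_len m a b"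
proof -
  assume "m < m'" "a < b"
  then have "(b - a) / 3 ^ m' \<le> (b - a) / 3 ^ Suc m"
    by (intro divide_left_mono power_increasing) auto
  then show ?thesis by (simp add: third_len_def field_simps)
qed

lemma third_len_last: "k \<ge> 1 \<Longrightarrow> third_len (k - 1) a b = (b - a) * eps k"
  by (simp add: third_len_def eps_def)

lemma sum_third_len:
  "k \<ge> 2 \<Longrightarrow> (\<Sum>m\<in>{0..k-2}. third_len m a b) = (b - a) * ((1 - 3 * eps k) / 2)"
proof -
  assume k: "k \<ge> 2"
  have "(\<Sum>m\<in>{0..k-2}. third_len m a b) = (b - a) * (\<Sum>m\<in>{0..k-2}. 1 / 3 ^ Suc m)"
    by (simp add: third_len_def sum_distrib_left)
  also have "\<dots> = (b - a) * ((1 - 1 / 3 ^ (k - 1)) / 2)"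
    using sum_inverse_powers_3[of "k - 2"] k by (simp add: Suc_diff_Suc numeral_2_eq_2)
  finally show ?thesis using three_eps_eq[of k] k by simp
qed

lemma children_disjoint:
  assumes "a < b" "m \<noteq> m'" "x \<in> {b - 2 * third_len m a b..<b - third_len m a b}"
  shows "x \<notin> {b - 2 * third_len m' a b..<b - third_len m' a b}"
  using assms third_len_mono[of m m' a b] third_len_mono[of m' m a b]
    third_len_pos[of a b m] third_len_pos[of a b m']
  by (cases "m < m'") auto

lemma sum_indicator_children_le_1:
  assumes "a < b" "finite A"
  shows "(\<Sum>m\<in>A. indicator {b - 2 * third_len m a b..<b - third_len m a b} x) \<le> (1::real)"
proof (cases "\<exists>m\<in>A. x \<in> {b - 2 * third_len m a b..<b - third_len m a b}")
  case True
  then obtain m where m: "m \<in> A" "x \<in> {b - 2 * third_len m a b..<b - third_len m a b}" by blast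
  have "(\<Sum>m'\<in>A. indicator {b - 2 * third_len m' a b..<b - third_len m' a b} x)
      = (\<Sum>m'\<in>A. if m' = m then 1 else (0::real))"
    using children_disjoint[OF \<open>a < b\<close> _ m(2)] m(2) by (intro sum.cong) auto
  then show ?thesis using assms(2) m(1) by simp
next
  case False
  then have "(\<Sum>m\<in>A. indicator {b - 2 * third_len m a b..<b - third_len m a b} x) = (0::real)"
    by (intro sum.neutral) auto
  then show ?thesis by simp
qed

section \<open>The building blocks \<open>w\<^sub>\<nu>\<close>\<close>

definition own_part :: "nat \<Rightarrow> real \<Rightarrow> real \<times> real \<Rightarrow> real \<Rightarrow> real" where
  "own_part k \<omega> I x = \<omega> / pp k * ((\<Sum>m\<in>{0..k-2}. indicator (ivl (third 1 (Im m I))) x)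
        + indicator (ivl (third 1 (Im (k-1) I)) \<union> ivl (third 2 (Im (k-1) I))) x
        + 4 * eps k / (1 + eps k) * indicator (ivl (third 3 (Im (k-1) I))) x)"

lemma wfun_Suc_eq: "wfun k (Suc \<nu>) \<omega> \<sigma> I =
   (\<lambda>x. own_part k \<omega> I x + (\<Sum>m\<in>{0..k-2}. wfun k \<nu> (2 * \<omega>) (\<sigma> / 2) (third 2 (Im m I)) x))"
  by (simp add: own_part_def fun_eq_iff)

lemma own_part_Ico:
  assumes "a \<le> b"
  shows "own_part k \<omega> (a, b) = (\<lambda>x. \<omega> / pp k *
      ((\<Sum>m\<in>{0..k-2}. indicator {b - 3 * third_len m a b..<b - 2 * third_len m a b} x)
        + indicator {b - 3 * third_len (k-1) a b..<b - third_len (k-1) a b} x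
        + 4 * eps k / (1 + eps k) * indicator {b - third_len (k-1) a b..<b} x))"
proof -
  have "third_len (k-1) a b \<ge> 0" using assms by (simp add: third_len_def)
  then have "ivl (third 1 (Im (k-1) (a, b))) \<union> ivl (third 2 (Im (k-1) (a, b)))
      = {b - 3 * third_len (k-1) a b..<b - third_len (k-1) a b}"
    unfolding third1_Im third2_Im ivl_def by auto
  then show ?thesis unfolding own_part_def third1_Im third3_Im ivl_def by simp
qed

lemma own_part_integrable: "a \<le> b \<Longrightarrow> own_part k \<omega> (a, b) integrable_on {c..<e}"
  unfolding own_part_Ico
  by (intro integrable_on_mult_right integrable_add integrable_sum integrable_indicator_Ico) auto

lemma wfun_integrable: "a \<le> b \<Longrightarrow> wfun k \<nu> \<omega> \<sigma> (a, b) integrable_on {c..<e}"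
proof (induction \<nu> arbitrary: \<omega> \<sigma> a b)
  case 0
  show ?case unfolding wfun.simps lhalf_def rhalf_def ivl_def fst_conv snd_conv
    by (intro integrable_on_mult_right integrable_add integrable_indicator_Ico)
next
  case (Suc \<nu>)
  have "third_len m a b \<ge> 0" for m using Suc.prems by (simp add: third_len_def)
  then show ?case unfolding wfun_Suc_eq third2_Im
    by (intro integrable_add integrable_sum own_part_integrable Suc) (auto simp: Suc.prems)
qed

lemma integral_wfun_Suc:
  assumes "a \<le> b"
  shows "integral {c..<e} (wfun k (Suc \<nu>) \<omega> \<sigma> (a, b)) = integral {c..<e} (own_part k \<omega> (a, b))
     + (\<Sum>m\<in>{0..k-2}. integral {c..<e}
          (wfun k \<nu> (2 * \<omega>) (\<sigma> / 2) (b - 2 * third_len m a b, b - third_len m a b)))"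
proof -
  have "third_len m a b \<ge> 0" for m using assms by (simp add: third_len_def)
  then show ?thesis unfolding wfun_Suc_eq third2_Im
    by (subst integral_add) (auto intro!: own_part_integrable wfun_integrable integrable_sum
        integral_sum simp: assms)
qed

lemma wfun_shift: "wfun k \<nu> \<omega> \<sigma> (a + t, b + t) (x + t) = wfun k \<nu> \<omega> \<sigma> (a, b) x"
proof (induction \<nu> arbitrary: \<omega> \<sigma> a b)
  case 0
  show ?case by (simp add: lhalf_def rhalf_def ivl_def indicator_def field_simps)
next
  case (Suc \<nu>)
  have shift: "third i (Im m (a + t, b + t))
      = (fst (third i (Im m (a, b))) + t, snd (third i (Im m (a, b))) + t)" for i m
    by (simp add: third_def Im_def algebra_simps)
  show ?case
    by (simp only: wfun.simps shift Suc.IH prod.collapse) (simp add: ivl_def indicator_def)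
qed

lemma wper_eq_wfun_unit: "wper k x = wfun k (nn k) 1 (pp k) (of_int \<lfloor>x\<rfloor>, of_int \<lfloor>x\<rfloor> + 1) x"
  using wfun_shift[of k "nn k" 1 "pp k" 0 "of_int \<lfloor>x\<rfloor>" 1 "frac x"]
  by (simp add: wper_def frac_def add.commute)

lemma own_part_nonneg: "\<omega> \<ge> 0 \<Longrightarrow> 0 \<le> own_part k \<omega> I x"
  using pp_pos[of k] eps_pos[of k] by (simp add: own_part_def sum_nonneg)

context
  fixes k :: nat
  assumes k2: "k \<ge> 2"
begin

lemma wfun_nonneg: "\<omega> \<ge> 0 \<Longrightarrow> 0 \<le> wfun k \<nu> \<omega> \<sigma> I x"
proof (induction \<nu> arbitrary: \<omega> \<sigma> I)
  case 0
  then show ?case using uu_pos[OF k2] pp_pos[of k] by simp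
next
  case (Suc \<nu>)
  then show ?case unfolding wfun_Suc_eq
    by (intro add_nonneg_nonneg own_part_nonneg sum_nonneg Suc.IH) auto
qed

lemma own_part_le: "\<omega> \<ge> 0 \<Longrightarrow> own_part k \<omega> I x \<le> 2 * \<omega>"
proof -
  assume \<omega>: "\<omega> \<ge> 0"
  have "(\<Sum>m\<in>{0..k-2}. indicator (ivl (third 1 (Im m I))) x) \<le> real (card {0..k-2}) * (1::real)"
    by (rule sum_bounded_above) (simp add: indicator_def)
  moreover have "real (card {0..k-2}) = real k - 1" using k2 by simp
  moreover have "4 * eps k / (1 + eps k) * indicator (ivl (third 3 (Im (k-1) I))) x \<le> (1::real)"
    using tail_weight_bounds[OF k2] by (simp add: indicator_def)
  moreover have "indicator (ivl (third 1 (Im (k-1) I)) \<union> ivl (third 2 (Im (k-1) I))) x \<le> (1::real)"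
    by (simp add: indicator_def)
  ultimately have bound: "(\<Sum>m\<in>{0..k-2}. indicator (ivl (third 1 (Im m I))) x)
      + indicator (ivl (third 1 (Im (k-1) I)) \<union> ivl (third 2 (Im (k-1) I))) x
      + 4 * eps k / (1 + eps k) * indicator (ivl (third 3 (Im (k-1) I))) x \<le> real k + 1"
    by linarith
  have "own_part k \<omega> I x \<le> \<omega> / pp k * (real k + 1)"
    unfolding own_part_def by (intro mult_left_mono bound) (use \<omega> pp_pos[of k] in auto)
  also have "\<dots> = \<omega> * ((real k + 1) / pp k)" by simp
  also have "\<dots> \<le> \<omega> * 2" using Suc_k_div_pp_le[OF k2] \<omega> by (intro mult_left_mono) auto
  finally show ?thesis by simp
qed

lemma wfun_0_le: "\<omega> \<ge> 0 \<Longrightarrow> wfun k 0 \<omega> \<sigma> I x \<le> 2 * \<omega>"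
proof -
  assume \<omega>: "\<omega> \<ge> 0"
  have "uu k * indicator (ivl (lhalf I)) x + 1 / uu k * indicator (ivl (rhalf I)) x \<le> uu k + 1 / uu k"
    using uu_pos[OF k2] by (intro add_mono) (auto simp: indicator_def)
  then have "wfun k 0 \<omega> \<sigma> I x \<le> \<omega> * ((uu k + 1 / uu k) / sqrt (pp k))"
    using \<omega> pp_pos[of k] by (simp add: mult_left_mono divide_right_mono)
  then show ?thesis using uu_plus_inverse[OF k2] by simp
qed

lemma wfun_outside: "a < b \<Longrightarrow> x \<notin> {a..<b} \<Longrightarrow> wfun k \<nu> \<omega> \<sigma> (a, b) x = 0"
proof (induction \<nu> arbitrary: \<omega> \<sigma> a b)
  case 0
  then show ?case by (auto simp: lhalf_def rhalf_def ivl_def indicator_def)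
next
  case (Suc \<nu>)
  have r: "0 < third_len m a b" "3 * third_len m a b \<le> b - a" for m
    using Suc.prems third_len_pos third_len_le by auto
  have "indicator {b - 3 * third_len j a b..<b - 2 * third_len j a b} x = (0::real)"
    and "indicator {b - 3 * third_len j a b..<b - third_len j a b} x = (0::real)"
    and "indicator {b - third_len j a b..<b} x = (0::real)" for j
    using Suc.prems r[of j] by (auto simp: indicator_def)
  then have "own_part k \<omega> (a, b) x = 0"
    using Suc.prems by (simp add: own_part_Ico)
  moreover have "wfun k \<nu> (2 * \<omega>) (\<sigma> / 2) (third 2 (Im m (a, b))) x = 0" for m
    unfolding third2_Im using Suc.prems r[of m] by (intro Suc.IH) auto
  ultimately show ?case by (simp add: wfun_Suc_eq)
qed

lemma own_part_on_child:
  assumes ab: "a < b" and m: "m \<le> k - 2"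
    and x: "x \<in> {b - 2 * third_len m a b..<b - third_len m a b}"
  shows "own_part k \<omega> (a, b) x = 0"
proof -
  have first_thirds: "indicator {b - 3 * third_len j a b..<b - 2 * third_len j a b} x = (0::real)" for j
    using x third_len_mono[OF _ ab, of j m] third_len_mono[OF _ ab, of m j] third_len_pos[OF ab, of m]
    by (cases j m rule: linorder_cases) (auto simp: indicator_def)
  have "3 * third_len (k-1) a b \<le> third_len m a b"
    using m k2 by (intro third_len_mono ab) linarith
  then have "indicator {b - 3 * third_len (k-1) a b..<b - third_len (k-1) a b} x = (0::real)"
    and "indicator {b - third_len (k-1) a b..<b} x = (0::real)"
    using x third_len_pos[OF ab, of "k-1"] by (auto simp: indicator_def)
  then show ?thesis
    using ab by (simp add: own_part_Ico first_thirds)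
qed

lemma wfun_Suc_on_child:
  assumes ab: "a < b" and m: "m \<le> k - 2"
    and x: "x \<in> {b - 2 * third_len m a b..<b - third_len m a b}"
  shows "wfun k (Suc \<nu>) \<omega> \<sigma> (a, b) x = wfun k \<nu> (2 * \<omega>) (\<sigma> / 2) (third 2 (Im m (a, b))) x"
proof -
  have "wfun k \<nu> (2 * \<omega>) (\<sigma> / 2) (third 2 (Im m' (a, b))) x = 0" if "m' \<noteq> m" for m'
    unfolding third2_Im using children_disjoint[OF ab _ x, of m'] that third_len_pos[OF ab, of m']
    by (intro wfun_outside) auto
  then have "(\<Sum>m'\<in>{0..k-2}. wfun k \<nu> (2 * \<omega>) (\<sigma> / 2) (third 2 (Im m' (a, b))) x)
      = wfun k \<nu> (2 * \<omega>) (\<sigma> / 2) (third 2 (Im m (a, b))) x"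
    using m by (subst sum.remove[of _ m]) (auto intro: sum.neutral)
  then show ?thesis by (simp add: wfun_Suc_eq own_part_on_child[OF ab m x])
qed

lemma integral_own_part_le:
  assumes ab: "a \<le> b" and \<omega>: "\<omega> \<ge> 0"
  shows "integral {c..<e} (own_part k \<omega> (a, b)) \<le> \<omega> * (b - a) * (3 * eps k)"
proof -
  define r where "r m = third_len m a b" for m
  define \<gamma> where "\<gamma> = 4 * eps k / (1 + eps k)"
  define L where "L = (\<Sum>m\<in>{0..k-2}. overlap c e (b - 3 * r m) (b - 2 * r m))
      + overlap c e (b - 3 * r (k-1)) (b - r (k-1)) + \<gamma> * overlap c e (b - r (k-1)) b"
  have r: "r m \<ge> 0" for m using ab by (simp add: r_def third_len_def)
  have "(own_part k \<omega> (a, b) has_integral \<omega> / pp k * L) {c..<e}"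
    unfolding own_part_Ico[OF ab] L_def r_def \<gamma>_def
    by (intro has_integral_mult_right has_integral_add has_integral_sum has_integral_indicator_Ico) auto
  then have "integral {c..<e} (own_part k \<omega> (a, b)) = \<omega> / pp k * L"
    by (rule integral_unique)
  also have "\<dots> \<le> \<omega> / pp k * ((\<Sum>m\<in>{0..k-2}. r m) + 2 * r (k-1) + \<gamma> * r (k-1))"
  proof -
    have "(\<Sum>m\<in>{0..k-2}. overlap c e (b - 3 * r m) (b - 2 * r m)) \<le> (\<Sum>m\<in>{0..k-2}. r m)"
      using r by (intro sum_mono) (smt (verit) overlap_le)
    moreover have "overlap c e (b - 3 * r (k-1)) (b - r (k-1)) \<le> 2 * r (k-1)"
      using r[of "k-1"] overlap_le[of "b - 3 * r (k-1)" "b - r (k-1)" c e] by simp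
    moreover have "\<gamma> * overlap c e (b - r (k-1)) b \<le> \<gamma> * r (k-1)"
      using r[of "k-1"] overlap_le[of "b - r (k-1)" b c e] tail_weight_bounds[OF k2]
      by (intro mult_left_mono) (auto simp: \<gamma>_def)
    ultimately show ?thesis
      unfolding L_def using \<omega> pp_pos[of k] by (intro mult_left_mono) auto
  qed
  also have "(\<Sum>m\<in>{0..k-2}. r m) + 2 * r (k-1) + \<gamma> * r (k-1)
      = (b - a) * ((1 - 3 * eps k) / 2 + 2 * eps k + \<gamma> * eps k)"
  proof -
    have last: "third_len (k - 1) a b = (b - a) * eps k" using k2 third_len_last[of k a b] by simp
    show ?thesis unfolding r_def sum_third_len[OF k2] last by (simp add: field_simps)
  qed
  also have "\<dots> = (b - a) * (pp k * (3 * eps k))"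
    by (simp only: \<gamma>_def pp_mass_identity)
  finally show ?thesis using pp_pos[of k] by simp
qed

lemma integral_wfun_le_mass:
  "a < b \<Longrightarrow> \<omega> \<ge> 0 \<Longrightarrow> integral {c..<e} (wfun k \<nu> \<omega> \<sigma> (a, b)) \<le> \<omega> * (b - a)"
proof (induction \<nu> arbitrary: \<omega> \<sigma> a b)
  case 0
  define h where "h = (a + b) / 2"
  have "(wfun k 0 \<omega> \<sigma> (a, b) has_integral
      \<omega> / sqrt (pp k) * (uu k * overlap c e a h + 1 / uu k * overlap c e h b)) {c..<e}"
    unfolding wfun.simps lhalf_def rhalf_def ivl_def fst_conv snd_conv h_def
    by (intro has_integral_mult_right has_integral_add has_integral_indicator_Ico)
  then have "integral {c..<e} (wfun k 0 \<omega> \<sigma> (a, b))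
      = \<omega> / sqrt (pp k) * (uu k * overlap c e a h + 1 / uu k * overlap c e h b)"
    by (rule integral_unique)
  also have "\<dots> \<le> \<omega> / sqrt (pp k) * (uu k * ((b - a) / 2) + 1 / uu k * ((b - a) / 2))"
    using overlap_le[of a h c e] overlap_le[of h b c e] 0 uu_pos[OF k2] pp_pos[of k]
    by (intro mult_left_mono add_mono) (auto simp: h_def field_simps)
  also have "\<dots> = \<omega> * ((uu k + 1 / uu k) / sqrt (pp k)) * ((b - a) / 2)"
    using uu_pos[OF k2] pp_pos[of k] by (simp add: field_simps)
  also have "\<dots> = \<omega> * (b - a)" using uu_plus_inverse[OF k2] by simp
  finally show ?case .
next
  case (Suc \<nu>)
  have "integral {c..<e} (wfun k (Suc \<nu>) \<omega> \<sigma> (a, b))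
      \<le> \<omega> * (b - a) * (3 * eps k) + (\<Sum>m\<in>{0..k-2}. 2 * \<omega> * third_len m a b)"
    unfolding integral_wfun_Suc[OF less_imp_le[OF Suc.prems(1)]]
    using Suc.prems third_len_pos[OF Suc.prems(1)]
    by (intro add_mono sum_mono integral_own_part_le) (auto intro: order_trans[OF Suc.IH])
  also have "\<dots> = \<omega> * (b - a)"
    by (simp only: sum_distrib_left[symmetric] sum_third_len[OF k2]) (simp add: field_simps)
  finally show ?case .
qed

lemma own_part_plus_children_le:
  assumes ab: "a < b" and "\<omega> \<ge> 0" "B \<ge> 2 * \<omega>"
  shows "own_part k \<omega> (a, b) x
      + B * (\<Sum>m\<in>{0..k-2}. indicator {b - 2 * third_len m a b..<b - third_len m a b} x) \<le> B"
proof (cases "\<exists>m\<in>{0..k-2}. x \<in> {b - 2 * third_len m a b..<b - third_len m a b}")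
  case True
  then obtain m where "m \<le> k - 2" "x \<in> {b - 2 * third_len m a b..<b - third_len m a b}" by auto
  then have "own_part k \<omega> (a, b) x = 0" by (rule own_part_on_child[OF ab])
  moreover have "B * (\<Sum>m\<in>{0..k-2}. indicator {b - 2 * third_len m a b..<b - third_len m a b} x) \<le> B * 1"
    using assms by (intro mult_left_mono sum_indicator_children_le_1) auto
  ultimately show ?thesis by simp
next
  case False
  then have "(\<Sum>m\<in>{0..k-2}. indicator {b - 2 * third_len m a b..<b - third_len m a b} x) = (0::real)"
    by (intro sum.neutral) auto
  then show ?thesis using own_part_le[of \<omega> "(a, b)" x] assms by simp
qed

lemma integral_own_part_plus_children_le:
  assumes "c \<le> e" "a < b" "\<omega> \<ge> 0" "B \<ge> 2 * \<omega>"
  shows "integral {c..<e} (own_part k \<omega> (a, b))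
      + B * (\<Sum>m\<in>{0..k-2}. overlap c e (b - 2 * third_len m a b) (b - third_len m a b)) \<le> B * (e - c)"
proof -
  let ?f = "\<lambda>x. own_part k \<omega> (a, b) x
      + B * (\<Sum>m\<in>{0..k-2}. indicator {b - 2 * third_len m a b..<b - third_len m a b} x)"
  have hi: "(?f has_integral integral {c..<e} (own_part k \<omega> (a, b))
      + B * (\<Sum>m\<in>{0..k-2}. overlap c e (b - 2 * third_len m a b) (b - third_len m a b))) {c..<e}"
    using assms by (intro has_integral_add has_integral_mult_right has_integral_sum
        has_integral_indicator_Ico integrable_integral own_part_integrable) auto
  have "integral {c..<e} ?f \<le> B * (e - c)"
  proof (rule integral_Ico_le_const)
    show "?f integrable_on {c..<e}" using hi by blast
    show "?f x \<le> B" for x using assms by (intro own_part_plus_children_le) auto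
  qed (use assms in simp)
  then show ?thesis using integral_unique[OF hi] by simp
qed

lemma integral_wfun_end_segment_le:
  "a < b \<Longrightarrow> \<omega> \<ge> 0 \<Longrightarrow> a \<le> s \<Longrightarrow> s < t \<Longrightarrow> t \<le> b \<Longrightarrow> s = a \<or> t = b \<Longrightarrow>
    integral {s..<t} (wfun k \<nu> \<omega> \<sigma> (a, b)) \<le> 4 * \<omega> * (t - s)"
proof (induction \<nu> arbitrary: \<omega> \<sigma> a b s t)
  case 0
  have "integral {s..<t} (wfun k 0 \<omega> \<sigma> (a, b)) \<le> 2 * \<omega> * (t - s)"
    using 0 by (intro integral_Ico_le_const wfun_integrable wfun_0_le) auto
  also have "\<dots> \<le> 4 * \<omega> * (t - s)" using 0 by (intro mult_right_mono) auto
  finally show ?case .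
next
  case (Suc \<nu>)
  note ab = \<open>a < b\<close> and \<omega> = \<open>\<omega> \<ge> 0\<close>
  define r where "r m = third_len m a b" for m
  define z where "z = (if s = a then t else s)"
  have r: "0 < r m" "3 * r m \<le> b - a" for m
    using ab third_len_pos third_len_le unfolding r_def by auto
  have short: "r m \<le> t - s" if "z \<in> {b - 2 * r m..<b - r m}" for m
    using that r[of m] Suc.prems unfolding z_def by (auto split: if_splits)
  text \<open>Only the child containing the free endpoint \<open>z\<close> can be cut by \<open>[s,t)\<close>.\<close>
  have child: "integral {s..<t} (wfun k \<nu> (2 * \<omega>) (\<sigma> / 2) (b - 2 * r m, b - r m))
      \<le> 2 * \<omega> * overlap s t (b - 2 * r m) (b - r m) + 2 * \<omega> * r m * indicator {b - 2 * r m..<b - r m} z"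
    for m
  proof (cases "z \<in> {b - 2 * r m..<b - r m}")
    case True
    have "integral {s..<t} (wfun k \<nu> (2 * \<omega>) (\<sigma> / 2) (b - 2 * r m, b - r m)) \<le> 2 * \<omega> * r m"
      using integral_wfun_le_mass[of "b - 2 * r m" "b - r m" "2 * \<omega>"] r[of m] \<omega> by simp
    moreover have "0 \<le> 2 * \<omega> * overlap s t (b - 2 * r m) (b - r m)"
      using \<omega> overlap_nonneg by simp
    ultimately show ?thesis using True by simp
  next
    case False
    then have "s \<le> b - 2 * r m \<and> b - r m \<le> t \<or> t \<le> b - 2 * r m \<or> b - r m \<le> s"
      using Suc.prems r[of m] unfolding z_def by (auto split: if_splits)
    then have "integral {s..<t} (wfun k \<nu> (2 * \<omega>) (\<sigma> / 2) (b - 2 * r m, b - r m))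
        \<le> 2 * \<omega> * overlap s t (b - 2 * r m) (b - r m)"
    proof (intro integral_le_by_mass)
      show "wfun k \<nu> (2 * \<omega>) (\<sigma> / 2) (b - 2 * r m, b - r m) x = 0"
        if "x \<notin> {b - 2 * r m..<b - r m}" for x
        using that r[of m] by (intro wfun_outside) auto
      show "integral {b - 2 * r m..<b - r m} (wfun k \<nu> (2 * \<omega>) (\<sigma> / 2) (b - 2 * r m, b - r m))
          \<le> 2 * \<omega> * (b - r m - (b - 2 * r m))"
        using r[of m] \<omega> by (intro integral_wfun_le_mass) auto
    qed (use \<omega> r[of m] in auto)
    then show ?thesis using False by simp
  qed
  have "(\<Sum>m\<in>{0..k-2}. 2 * \<omega> * r m * indicator {b - 2 * r m..<b - r m} z)
      \<le> (\<Sum>m\<in>{0..k-2}. 2 * \<omega> * (t - s) * indicator {b - 2 * r m..<b - r m} z)"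
    using short \<omega> by (intro sum_mono) (auto simp: indicator_def intro: mult_left_mono)
  also have "\<dots> \<le> 2 * \<omega> * (t - s) * 1"
    unfolding sum_distrib_left[symmetric] r_def using ab \<omega> Suc.prems
    by (intro mult_left_mono sum_indicator_children_le_1) auto
  finally have endpoint: "(\<Sum>m\<in>{0..k-2}. 2 * \<omega> * r m * indicator {b - 2 * r m..<b - r m} z)
      \<le> 2 * \<omega> * (t - s)" by simp
  have "integral {s..<t} (wfun k (Suc \<nu>) \<omega> \<sigma> (a, b))
      \<le> integral {s..<t} (own_part k \<omega> (a, b)) + (\<Sum>m\<in>{0..k-2}.
          2 * \<omega> * overlap s t (b - 2 * r m) (b - r m) + 2 * \<omega> * r m * indicator {b - 2 * r m..<b - r m} z)"
    unfolding integral_wfun_Suc[OF less_imp_le[OF ab]] r_def[symmetric]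
    by (intro add_left_mono sum_mono child)
  also have "\<dots> = (integral {s..<t} (own_part k \<omega> (a, b))
        + 2 * \<omega> * (\<Sum>m\<in>{0..k-2}. overlap s t (b - 2 * r m) (b - r m)))
      + (\<Sum>m\<in>{0..k-2}. 2 * \<omega> * r m * indicator {b - 2 * r m..<b - r m} z)"
    by (simp add: sum.distrib sum_distrib_left)
  also have "\<dots> \<le> 2 * \<omega> * (t - s) + 2 * \<omega> * (t - s)"
    using integral_own_part_plus_children_le[of s t a b \<omega> "2 * \<omega>"] Suc.prems endpoint
    unfolding r_def by (intro add_mono) auto
  also have "\<dots> = 4 * \<omega> * (t - s)" by simp
  finally show ?case .
qed

lemma integral_wfun_Suc_le_off_children:
  assumes ab: "a < b" and \<omega>: "\<omega> \<ge> 0" and "c \<le> e"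
    and off: "\<And>m. m \<le> k - 2 \<Longrightarrow> \<not> (b - 2 * third_len m a b \<le> c \<and> e \<le> b - third_len m a b)"
  shows "integral {c..<e} (wfun k (Suc \<nu>) \<omega> \<sigma> (a, b)) \<le> 8 * \<omega> * (e - c)"
proof -
  define r where "r m = third_len m a b" for m
  have r: "0 < r m" for m using ab third_len_pos unfolding r_def by auto
  have child: "integral {c..<e} (wfun k \<nu> (2 * \<omega>) (\<sigma> / 2) (b - 2 * r m, b - r m))
      \<le> 8 * \<omega> * overlap c e (b - 2 * r m) (b - r m)" if "m \<in> {0..k-2}" for m
  proof (rule integral_le_by_end_segments)
    show "wfun k \<nu> (2 * \<omega>) (\<sigma> / 2) (b - 2 * r m, b - r m) x = 0" if "x \<notin> {b - 2 * r m..<b - r m}" for x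
      using that r[of m] by (intro wfun_outside) auto
    show "integral {s..<t} (wfun k \<nu> (2 * \<omega>) (\<sigma> / 2) (b - 2 * r m, b - r m)) \<le> 8 * \<omega> * (t - s)"
      if "b - 2 * r m \<le> s" "s < t" "t \<le> b - r m" "s = b - 2 * r m \<or> t = b - r m" for s t
      using integral_wfun_end_segment_le[of "b - 2 * r m" "b - r m" "2 * \<omega>" s t] that r[of m] \<omega>
      by simp
  qed (use \<omega> off that in \<open>auto simp: r_def\<close>)
  have "integral {c..<e} (wfun k (Suc \<nu>) \<omega> \<sigma> (a, b))
      \<le> integral {c..<e} (own_part k \<omega> (a, b))
        + (\<Sum>m\<in>{0..k-2}. 8 * \<omega> * overlap c e (b - 2 * r m) (b - r m))"
    unfolding integral_wfun_Suc[OF less_imp_le[OF ab]] r_def[symmetric]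
    by (intro add_left_mono sum_mono child)
  also have "\<dots> \<le> 8 * \<omega> * (e - c)"
    using integral_own_part_plus_children_le[of c e a b \<omega> "8 * \<omega>"] assms
    unfolding r_def by (simp add: sum_distrib_left)
  finally show ?thesis .
qed

end


section \<open>Carriers and the majorant \<open>w\<^sup>~\<close>\<close>

lemma carriers_nonempty: "I \<in> carriers k d \<Longrightarrow> fst I < snd I"
proof (induction d arbitrary: I)
  case (Suc d)
  then obtain a b m where "(a, b) \<in> carriers k d" "I = third 2 (Im m (a, b))" by auto
  then show ?case using Suc.IH third_len_pos[of a b m] by (auto simp: third2_Im)
qed auto

lemma wtilde_ge_on_carrier:
  assumes I: "I \<in> carriers k d" and "d \<le> nn k" and x: "x \<in> ivl I"
  shows "wtilde k x \<ge> 2 ^ (d + 1)"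
proof -
  define n where "n = nn k"
  define S where "S d' = (\<Union>I\<in>carriers k d'. ivl I)" for d'
  define D where "D = Max {d'. d' \<le> n \<and> x \<in> S d'}"
  have fin: "finite {d'. d' \<le> n \<and> x \<in> S d'}" by simp
  have d: "d \<in> {d'. d' \<le> n \<and> x \<in> S d'}" using assms unfolding S_def n_def by auto
  then have "D \<in> {d'. d' \<le> n \<and> x \<in> S d'}" unfolding D_def using fin by (intro Max_in) auto
  then have D: "D \<le> n" "x \<in> S D" by auto
  have D_max: "d' \<le> D" if "d' \<le> n" "x \<in> S d'" for d'
    unfolding D_def using fin that by (intro Max_ge) auto
  then have "d \<le> D" using d by simp
  have supp: "suppw k (n - d') = S d'" if "d' \<le> n" for d'
    using that unfolding S_def n_def suppw_def by (simp add: diff_diff_cancel)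
  have "(2::real) ^ (D + 1) \<le> wtilde k x"
  proof (cases "D = n")
    case True
    then have "x \<in> suppw k 0" using D supp[of n] by simp
    then show ?thesis unfolding wtilde_def n_def[symmetric] True by (simp add: sum_nonneg)
  next
    case False
    then have "x \<in> suppw k (n - ((D + 1) - 1)) - suppw k (n - (D + 1))"
      using D D_max[of "D + 1"] supp[of D] supp[of "D + 1"] by auto
    then have "(2::real) ^ (D + 1)
        = 2 ^ (D + 1) * indicator (suppw k (n - ((D + 1) - 1)) - suppw k (n - (D + 1))) x"
      by simp
    also have "\<dots> \<le> (\<Sum>l\<in>{1..n}. 2 ^ l * indicator (suppw k (n - (l - 1)) - suppw k (n - l)) x)"
      using False D by (intro member_le_sum) auto
    finally have "(2::real) ^ (D + 1)
        \<le> (\<Sum>l\<in>{1..n}. 2 ^ l * indicator (suppw k (n - (l - 1)) - suppw k (n - l)) x)" .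
    moreover have "0 \<le> (2::real) ^ (n + 1) * indicator (suppw k 0) x" by simp
    ultimately show ?thesis unfolding wtilde_def n_def[symmetric] by linarith
  qed
  moreover have "(2::real) ^ (d + 1) \<le> 2 ^ (D + 1)" using \<open>d \<le> D\<close> by (intro power_increasing) auto
  ultimately show ?thesis by linarith
qed

lemma wtilde_ge_2: "wtilde k x \<ge> 2"
  using wtilde_ge_on_carrier[of "(of_int \<lfloor>x\<rfloor>, of_int \<lfloor>x\<rfloor> + 1)" k 0 x]
  by (simp add: ivl_def)

context
  fixes k :: nat
  assumes k2: "k \<ge> 2"
begin

lemma wper_nonneg: "wper k x \<ge> 0"
  unfolding wper_eq_wfun_unit by (simp add: wfun_nonneg[OF k2])

lemma wper_on_carrier:
  "I \<in> carriers k d \<Longrightarrow> d \<le> nn k \<Longrightarrow> x \<in> ivl I \<Longrightarrow>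
    wper k x = wfun k (nn k - d) (2 ^ d) (pp k / 2 ^ d) I x"
proof (induction d arbitrary: I x)
  case 0
  then obtain j :: int where I: "I = (of_int j, of_int j + 1)" by auto
  then have "\<lfloor>x\<rfloor> = j" using 0 by (simp add: ivl_def floor_eq_iff)
  then show ?case by (simp add: wper_eq_wfun_unit I)
next
  case (Suc d)
  then obtain a b m where J: "(a, b) \<in> carriers k d" and m: "m \<le> k - 2"
    and I: "I = third 2 (Im m (a, b))" by auto
  have ab: "a < b" using carriers_nonempty[OF J] by simp
  have x: "x \<in> {b - 2 * third_len m a b..<b - third_len m a b}"
    using Suc.prems(3) by (simp add: I third2_Im ivl_def)
  then have "x \<in> ivl (a, b)"
    using third_len_pos[OF ab, of m] third_len_le[of a b m] ab by (auto simp: ivl_def)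
  then have "wper k x = wfun k (Suc (nn k - Suc d)) (2 ^ d) (pp k / 2 ^ d) (a, b) x"
    using Suc.IH[OF J] Suc.prems(2) by (simp add: Suc_diff_Suc)
  also have "\<dots> = wfun k (nn k - Suc d) (2 ^ Suc d) (pp k / 2 ^ Suc d) I x"
    unfolding wfun_Suc_on_child[OF k2 ab m x] I by (simp add: mult.commute)
  finally show ?case .
qed

lemma integral_wper_le_in_carrier:
  assumes "I \<in> carriers k d" "d \<le> nn k" "fst I \<le> c" "c < e" "e \<le> snd I" "x \<in> {c..<e}"
  shows "integral {c..<e} (wper k) \<le> 4 * wtilde k x * (e - c)"
  using assms
proof (induction "nn k - d" arbitrary: d I)
  case 0
  then have d: "d = nn k" by simp
  have "integral {c..<e} (wper k) = integral {c..<e} (wfun k 0 (2 ^ d) (pp k / 2 ^ d) I)"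
    using 0 wper_on_carrier[of I d] d by (intro integral_cong) (auto simp: ivl_def)
  also have "\<dots> \<le> 2 * 2 ^ d * (e - c)"
    using 0 carriers_nonempty[OF 0(2)] wfun_0_le[OF k2]
    by (intro integral_Ico_le_const wfun_integrable[of "fst I" "snd I", simplified]) auto
  also have "\<dots> \<le> 4 * wtilde k x * (e - c)"
  proof -
    have "2 * 2 ^ d \<le> wtilde k x"
      using wtilde_ge_on_carrier[OF 0(2,3), of x] 0 by (auto simp: ivl_def)
    moreover have "(0::real) \<le> 2 ^ d" by simp
    ultimately have "2 * 2 ^ d \<le> 4 * wtilde k x" by linarith
    then show ?thesis using 0 by (intro mult_right_mono) auto
  qed
  finally show ?case .
next
  case (Suc \<nu>)
  obtain a b where I: "I = (a, b)" by force
  have ab: "a < b" using carriers_nonempty[OF Suc.prems(1)] I by simp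
  show ?case
  proof (cases "\<exists>m \<le> k - 2. b - 2 * third_len m a b \<le> c \<and> e \<le> b - third_len m a b")
    case True
    then obtain m where m: "m \<le> k - 2" "b - 2 * third_len m a b \<le> c" "e \<le> b - third_len m a b"
      by blast
    have "third 2 (Im m (a, b)) \<in> carriers k (Suc d)" using Suc.prems(1) I m(1) by auto
    then have child: "(b - 2 * third_len m a b, b - third_len m a b) \<in> carriers k (Suc d)"
      by (simp only: third2_Im)
    show ?thesis
      by (rule Suc.hyps(1)[OF _ child]) (use Suc.hyps(2) Suc.prems m in auto)
  next
    case False
    have "integral {c..<e} (wper k) = integral {c..<e} (wfun k (Suc \<nu>) (2 ^ d) (pp k / 2 ^ d) (a, b))"
      using Suc wper_on_carrier[of I d] I by (intro integral_cong) (auto simp: ivl_def)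
    also have "\<dots> \<le> 8 * 2 ^ d * (e - c)"
      using False ab Suc.prems by (intro integral_wfun_Suc_le_off_children[OF k2]) auto
    also have "\<dots> \<le> 4 * wtilde k x * (e - c)"
      using wtilde_ge_on_carrier[OF Suc.prems(1,2), of x] Suc.prems I
      by (intro mult_right_mono) (auto simp: ivl_def)
    finally show ?thesis .
  qed
qed

lemma integral_wper_le_across_integers:
  assumes "c < e" and across: "\<And>j::int. \<not> (of_int j \<le> c \<and> e \<le> of_int j + 1)"
  shows "integral {c..<e} (wper k) \<le> 4 * (e - c)"
proof -
  define J where "J = {\<lfloor>c\<rfloor>..\<lfloor>e\<rfloor>}"
  define G where "G j = wfun k (nn k) 1 (pp k) (of_int j, of_int j + 1)" for j :: int
  have "finite J" by (simp add: J_def)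
  have "wper k x = (\<Sum>j\<in>J. G j x)" if "x \<in> {c..<e}" for x
  proof -
    have "G j x = 0" if "j \<noteq> \<lfloor>x\<rfloor>" for j
      unfolding G_def using that floor_eq_iff[of x j] by (intro wfun_outside[OF k2]) auto
    moreover have "\<lfloor>x\<rfloor> \<in> J" using \<open>x \<in> {c..<e}\<close> by (auto simp: J_def intro: floor_mono)
    ultimately show ?thesis
      using \<open>finite J\<close> by (simp add: wper_eq_wfun_unit G_def sum.remove[of J "\<lfloor>x\<rfloor>"])
  qed
  then have "integral {c..<e} (wper k) = integral {c..<e} (\<lambda>x. \<Sum>j\<in>J. G j x)"
    by (rule integral_cong)
  also have "\<dots> = (\<Sum>j\<in>J. integral {c..<e} (G j))"
    using \<open>finite J\<close> by (intro integral_sum) (auto simp: G_def intro: wfun_integrable)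
  also have "\<dots> \<le> (\<Sum>j\<in>J. 4 * overlap c e (of_int j) (of_int j + 1))"
  proof (intro sum_mono integral_le_by_end_segments)
    show "G j x = 0" if "x \<notin> {of_int j..<of_int j + 1}" for j x
      unfolding G_def using that by (intro wfun_outside[OF k2]) auto
    show "integral {s..<t} (G j) \<le> 4 * (t - s)"
      if "of_int j \<le> s" "s < t" "t \<le> of_int j + 1" "s = of_int j \<or> t = of_int j + 1" for j s t
      using integral_wfun_end_segment_le[OF k2, of "of_int j" "of_int j + 1" 1 s t] that
      unfolding G_def by simp
  qed (use across in auto)
  also have "\<dots> = 4 * integral {c..<e} (\<lambda>x. \<Sum>j\<in>J. indicator {of_int j..<of_int j + 1} x)"
  proof -
    have "((\<lambda>x. \<Sum>j\<in>J. indicator {of_int j..<of_int j + 1} x) has_integral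
        (\<Sum>j\<in>J. overlap c e (of_int j) (of_int j + 1))) {c..<e}"
      by (intro has_integral_sum \<open>finite J\<close> has_integral_indicator_Ico)
    then show ?thesis by (simp add: integral_unique sum_distrib_left)
  qed
  also have "\<dots> \<le> 4 * (1 * (e - c))"
  proof -
    have "(\<Sum>j\<in>J. indicator {of_int j..<of_int j + 1} x) \<le> (1::real)" for x :: real
    proof -
      have "(\<Sum>j\<in>J. indicator {of_int j..<of_int j + 1} x) = (\<Sum>j\<in>J. if j = \<lfloor>x\<rfloor> then 1 else (0::real))"
        by (intro sum.cong) (auto simp: indicator_def dest: floor_unique)
      then show ?thesis using \<open>finite J\<close> by simp
    qed
    then show ?thesis
      using \<open>finite J\<close> \<open>c < e\<close>
      by (intro mult_left_mono integral_Ico_le_const integrable_sum integrable_indicator_Ico) auto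
  qed
  finally show ?thesis by simp
qed

lemma integral_wper_le_wtilde:
  assumes "a \<le> x" "x < b"
  shows "integral {a..<b} (wper k) \<le> 4 * wtilde k x * (b - a)"
proof (cases "\<exists>j::int. of_int j \<le> a \<and> b \<le> of_int j + 1")
  case True
  then obtain j :: int where "of_int j \<le> a" "b \<le> of_int j + 1" by blast
  moreover have "(of_int j, of_int j + 1) \<in> carriers k 0" by auto
  ultimately show ?thesis
    using assms by (intro integral_wper_le_in_carrier[of "(of_int j, of_int j + 1)" 0]) auto
next
  case False
  then have "integral {a..<b} (wper k) \<le> 4 * (b - a)"
    using assms by (intro integral_wper_le_across_integers) auto
  also have "\<dots> \<le> 4 * wtilde k x * (b - a)"
    using wtilde_ge_2[of k x] assms by (intro mult_right_mono) auto
  finally show ?thesis .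
qed

end

theorem proposition3:
  fixes k :: nat and x :: real
  assumes "k \<ge> 2"
  shows "maxfun (wper k) x \<le> ereal (9 / 2 * wtilde k x)"
  unfolding maxfun_def
proof (rule SUP_least, clarify)
  fix a b assume ab: "a \<le> x" "x < b"
  have "integral {a..<b} (\<lambda>t. \<bar>wper k t\<bar>) = integral {a..<b} (wper k)"
    using wper_nonneg[OF assms] by simp
  also have "\<dots> \<le> 4 * wtilde k x * (b - a)"
    using integral_wper_le_wtilde[OF assms ab] .
  also have "\<dots> \<le> 9 / 2 * wtilde k x * (b - a)"
    using wtilde_ge_2[of k x] ab by (intro mult_right_mono) auto
  finally show "ereal (integral {fst (a, b)..<snd (a, b)} (\<lambda>t. \<bar>wper k t\<bar>) / (snd (a, b) - fst (a, b)))
      \<le> ereal (9 / 2 * wtilde k x)"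
    using ab by (simp add: divide_le_eq)
qed

end
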